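(* Fix parameters and a population size vector $\mathbf m$ as in the context, with Assumption (A), and suppose $c_P\ge\Delta L\cdot\tau_{DA}$. Then for any $K\in\mathbb N$ and $\beta_{IA}\in(0,1]$, any Nash equilibrium $\mathbf x^\star$ of the population game with parameters $(K,\beta_{IA})$, and the minimizer $\mathbf y^\star$ of $\overline{SC}$ over $\mathcal Y$ (for the same $K,\beta_{IA}$), $$\frac{SC(\mathbf x^\star)}{\overline{SC}(\mathbf y^\star)}\le 1+d_{\rm avg}\cdot e_{\max}(\mathbf m,K,\beta_{IA}),\qquad e_{\max}(\mathbf m,K,\beta_{IA})=\beta_{IA}\,p_U^i\sum_{k=0}^{K-1}\Big(\frac{\beta_{IA}\,p_U^i}{d_{\rm avg}}\sum_{d\in\mathcal D}d(d-1)m_d\Big)^k.$$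
   Context: Let $D_{\max}\in\mathbb N$, $\mathcal D=\{1,\dots,D_{\max}\}$, $\mathcal A=\{I,N,P\}$. A population size vector is $\mathbf m=(m_d)_{d\in\mathcal D}$ with $m_d>0$, $\sum_d m_d=1$; $d_{\rm avg}=\sum_d d\,m_d$. A social state is $\mathbf x=(x_{d,a})$ with $x_{d,a}\ge0$, $\sum_a x_{d,a}=m_d$. Parameters: $\tau_{DA}\in(0,1]$; $0\le L_P<L_U$, $\Delta L=L_U-L_P$; $0\le p_P^i<p_U^i\le1$; $\beta_{IA}\in(0,1]$; $K\in\mathbb N$; $c_P,c_I\ge0$; $\xi_{\rm cov}\in(0,1]$, $ded\ge0$, $Cov_{\max}\ge0$. Define $w_d=d\,m_d/\sum_{d'}d'm_{d'}$, $g_{d,a}=x_{d,a}/m_d$, $g_{d,U}=g_{d,N}+g_{d,I}$, $\gamma(\mathbf x)=\beta_{IA}\sum_d w_d(g_{d,P}p_P^i+g_{d,U}p_U^i)$, $\lambda(\mathbf x)=\beta_{IA}\sum_d w_d(d-1)(g_{d,P}p_P^i+g_{d,U}p_U^i)$, $e(\mathbf x)=\gamma(\mathbf x)\sum_{k=1}^K\lambda(\mathbf x)^{k-1}$. Costs: $C_{d,P}(\mathbf x)=\tau_{DA}(1+d\,e(\mathbf x))L_P+c_P$, $C_{d,N}(\mathbf x)=\tau_{DA}(1+d\,e(\mathbf x))L_U$, $C_{d,I}(\mathbf x)=C_{d,N}(\mathbf x)+c_I-\min\big(Cov_{\max},\xi_{\rm cov}\max(0,C_{d,N}(\mathbf x)-ded)\big)$.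 A Nash equilibrium is a social state $\mathbf x^\star$ such that $x^\star_{d,a}>0$ implies $C_{d,a}(\mathbf x^\star)=\min_{a'\in\mathcal A}C_{d,a'}(\mathbf x^\star)$. Social cost of a social state: $SC(\mathbf x)=\sum_d\big(x_{d,P}C_{d,P}(\mathbf x)+(m_d-x_{d,P})C_{d,N}(\mathbf x)\big)$. Let $\mathcal Y=\prod_d[0,m_d]$, $\mathbf X(\mathbf y)$ the social state with $X_{d,P}=y_d$, $X_{d,N}=m_d-y_d$, $X_{d,I}=0$, and $\overline{SC}(\mathbf y)=SC(\mathbf X(\mathbf y))$; this has a unique minimizer $\mathbf y^\star$ over $\mathcal Y$. Assumption (A): $L_P<(1-\xi_{\rm cov})L_U$ and $c_P>c_I+ded$. *)

theory Defs
  imports Complex_Main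
begin

datatype act = I | N | P

record params =
  tau :: real
  LP :: real
  LU :: real
  pP :: real
  pU :: real
  beta :: real
  Kh :: nat
  cP :: real
  cI :: real
  xi :: real
  ded :: real
  Covmax :: real

definition Dset :: "nat \<Rightarrow> nat set" where
  "Dset Dmax = {1..Dmax}"

definition pop_vector :: "nat \<Rightarrow> (nat \<Rightarrow> real) \<Rightarrow> bool" where
  "pop_vector Dmax m \<longleftrightarrow> (\<forall>d\<in>Dset Dmax. m d > 0) \<and> (\<Sum>d\<in>Dset Dmax. m d) = 1"

definition davg :: "nat \<Rightarrow> (nat \<Rightarrow> real) \<Rightarrow> real" where
  "davg Dmax m = (\<Sum>d\<in>Dset Dmax. real d * m d)"

definition social_state :: "nat \<Rightarrow> (nat \<Rightarrow> real) \<Rightarrow> (nat \<Rightarrow> act \<Rightarrow> real) \<Rightarrow> bool" where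
  "social_state Dmax m x \<longleftrightarrow>
     (\<forall>d\<in>Dset Dmax. (\<forall>a. x d a \<ge> 0) \<and> x d I + x d N + x d P = m d)"

definition wgt :: "nat \<Rightarrow> (nat \<Rightarrow> real) \<Rightarrow> nat \<Rightarrow> real" where
  "wgt Dmax m d = real d * m d / (\<Sum>d'\<in>Dset Dmax. real d' * m d')"

definition gfrac :: "(nat \<Rightarrow> real) \<Rightarrow> (nat \<Rightarrow> act \<Rightarrow> real) \<Rightarrow> nat \<Rightarrow> act \<Rightarrow> real" where
  "gfrac m x d a = x d a / m d"

definition gU :: "(nat \<Rightarrow> real) \<Rightarrow> (nat \<Rightarrow> act \<Rightarrow> real) \<Rightarrow> nat \<Rightarrow> real" where
  "gU m x d = gfrac m x d N + gfrac m x d I"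

definition gam :: "params \<Rightarrow> nat \<Rightarrow> (nat \<Rightarrow> real) \<Rightarrow> (nat \<Rightarrow> act \<Rightarrow> real) \<Rightarrow> real" where
  "gam p Dmax m x = beta p * (\<Sum>d\<in>Dset Dmax.
      wgt Dmax m d * (gfrac m x d P * pP p + gU m x d * pU p))"

definition lam :: "params \<Rightarrow> nat \<Rightarrow> (nat \<Rightarrow> real) \<Rightarrow> (nat \<Rightarrow> act \<Rightarrow> real) \<Rightarrow> real" where
  "lam p Dmax m x = beta p * (\<Sum>d\<in>Dset Dmax.
      wgt Dmax m d * (real d - 1) * (gfrac m x d P * pP p + gU m x d * pU p))"

definition ext :: "params \<Rightarrow> nat \<Rightarrow> (nat \<Rightarrow> real) \<Rightarrow> (nat \<Rightarrow> act \<Rightarrow> real) \<Rightarrow> real" where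
  "ext p Dmax m x = gam p Dmax m x * (\<Sum>k\<in>{1..Kh p}. lam p Dmax m x ^ (k - 1))"

definition cost :: "params \<Rightarrow> nat \<Rightarrow> (nat \<Rightarrow> real) \<Rightarrow> (nat \<Rightarrow> act \<Rightarrow> real) \<Rightarrow> nat \<Rightarrow> act \<Rightarrow> real" where
  "cost p Dmax m x d a =
     (let CN = tau p * (1 + real d * ext p Dmax m x) * LU p in
      case a of
        P \<Rightarrow> tau p * (1 + real d * ext p Dmax m x) * LP p + cP p
      | N \<Rightarrow> CN
      | I \<Rightarrow> CN + cI p - min (Covmax p) (xi p * max 0 (CN - ded p)))"

definition nash_eq :: "params \<Rightarrow> nat \<Rightarrow> (nat \<Rightarrow> real) \<Rightarrow> (nat \<Rightarrow> act \<Rightarrow> real) \<Rightarrow> bool" where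
  "nash_eq p Dmax m x \<longleftrightarrow> social_state Dmax m x \<and>
     (\<forall>d\<in>Dset Dmax. \<forall>a. x d a > 0 \<longrightarrow>
        cost p Dmax m x d a = (MIN a'\<in>(UNIV::act set). cost p Dmax m x d a'))"

definition SC :: "params \<Rightarrow> nat \<Rightarrow> (nat \<Rightarrow> real) \<Rightarrow> (nat \<Rightarrow> act \<Rightarrow> real) \<Rightarrow> real" where
  "SC p Dmax m x = (\<Sum>d\<in>Dset Dmax.
      x d P * cost p Dmax m x d P + (m d - x d P) * cost p Dmax m x d N)"

definition Yset :: "nat \<Rightarrow> (nat \<Rightarrow> real) \<Rightarrow> (nat \<Rightarrow> real) set" where
  "Yset Dmax m = {y. \<forall>d\<in>Dset Dmax. 0 \<le> y d \<and> y d \<le> m d}"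

definition Xof :: "(nat \<Rightarrow> real) \<Rightarrow> (nat \<Rightarrow> real) \<Rightarrow> nat \<Rightarrow> act \<Rightarrow> real" where
  "Xof m y d a = (case a of P \<Rightarrow> y d | N \<Rightarrow> m d - y d | I \<Rightarrow> 0)"

definition SCbar :: "params \<Rightarrow> nat \<Rightarrow> (nat \<Rightarrow> real) \<Rightarrow> (nat \<Rightarrow> real) \<Rightarrow> real" where
  "SCbar p Dmax m y = SC p Dmax m (Xof m y)"

definition emax :: "params \<Rightarrow> nat \<Rightarrow> (nat \<Rightarrow> real) \<Rightarrow> real" where
  "emax p Dmax m = beta p * pU p * (\<Sum>k<Kh p.
      (beta p * pU p / davg Dmax m * (\<Sum>d\<in>Dset Dmax. real d * (real d - 1) * m d)) ^ k)"

definition valid_params :: "params \<Rightarrow> bool" where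
  "valid_params p \<longleftrightarrow>
     0 < tau p \<and> tau p \<le> 1 \<and>
     0 \<le> LP p \<and> LP p < LU p \<and>
     0 \<le> pP p \<and> pP p < pU p \<and> pU p \<le> 1 \<and>
     0 < beta p \<and> beta p \<le> 1 \<and>
     Kh p \<ge> 1 \<and>
     0 \<le> cP p \<and> 0 \<le> cI p \<and>
     0 < xi p \<and> xi p \<le> 1 \<and> 0 \<le> ded p \<and> 0 \<le> Covmax p"

definition assumption_A :: "params \<Rightarrow> bool" where
  "assumption_A p \<longleftrightarrow> LP p < (1 - xi p) * LU p \<and> cP p > cI p + ded p"

end

theory Submission
  imports Defs
begin

text \<open>At a Nash equilibrium nobody protects unless protecting is no costlier than doing nothing, so
  the equilibrium social cost is at most that of everybody staying unprotected,
  \<open>\<tau>\<^sub>D\<^sub>A L\<^sub>U (1 + d\<^sub>a\<^sub>v\<^sub>g e(x\<^sup>\<star>))\<close>. The term \<open>e = \<gamma> \<Sum>\<^sub>k \<lambda>\<^sup>k\<^sup>-\<^sup>1\<close> is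
  monotone in \<open>\<gamma>, \<lambda> \<ge> 0\<close>, and both are largest when everybody is unprotected,
  whence \<open>e(x\<^sup>\<star>) \<le> e\<^sub>m\<^sub>a\<^sub>x\<close>. Conversely, when \<open>c\<^sub>P \<ge> \<Delta>L \<tau>\<^sub>D\<^sub>A\<close> every degree class pays at least
  \<open>\<tau>\<^sub>D\<^sub>A L\<^sub>U\<close> per agent whatever it does, so \<open>\<tau>\<^sub>D\<^sub>A L\<^sub>U\<close> bounds the social cost of every
  state from below, in particular the optimum.\<close>

lemma UNIV_act: "(UNIV :: act set) = {I, N, P}"
  using act.exhaust by auto

lemma cost_P: "cost p Dmax m x d P = tau p * (1 + real d * ext p Dmax m x) * LP p + cP p"
  by (simp add: cost_def Let_def)

lemma cost_N: "cost p Dmax m x d N = tau p * (1 + real d * ext p Dmax m x) * LU p"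
  by (simp add: cost_def Let_def)

lemma davg_pos:
  assumes "Dmax \<ge> 1" "pop_vector Dmax m"
  shows "davg Dmax m > 0"
proof -
  have "1 \<in> Dset Dmax" using assms(1) by (simp add: Dset_def)
  then show ?thesis
    using assms(2) unfolding davg_def pop_vector_def
    by (intro sum_pos2[of _ 1]) (auto simp: Dset_def less_imp_le)
qed

lemma wgt_nonneg:
  assumes "pop_vector Dmax m" "d \<in> Dset Dmax"
  shows "wgt Dmax m d \<ge> 0"
  using assms by (auto simp: wgt_def pop_vector_def less_imp_le intro!: divide_nonneg_nonneg sum_nonneg)

lemma sum_wgt:
  assumes "davg Dmax m \<noteq> 0"
  shows "(\<Sum>d\<in>Dset Dmax. wgt Dmax m d) = 1"
  using assms by (simp add: wgt_def davg_def sum_divide_distrib[symmetric])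

definition fraction_split :: "nat \<Rightarrow> (nat \<Rightarrow> real) \<Rightarrow> (nat \<Rightarrow> act \<Rightarrow> real) \<Rightarrow> bool" where
  "fraction_split Dmax m x \<longleftrightarrow>
     (\<forall>d\<in>Dset Dmax. gfrac m x d P \<ge> 0 \<and> gU m x d \<ge> 0 \<and> gfrac m x d P + gU m x d = 1)"

lemma social_state_fraction_split:
  assumes "pop_vector Dmax m" "social_state Dmax m x"
  shows "fraction_split Dmax m x"
  using assms by (auto simp: fraction_split_def social_state_def pop_vector_def gfrac_def gU_def
      field_simps)

lemma Xof_fraction_split:
  assumes "pop_vector Dmax m" "y \<in> Yset Dmax m"
  shows "fraction_split Dmax m (Xof m y)"
  using assms by (auto simp: fraction_split_def Yset_def pop_vector_def gfrac_def gU_def Xof_def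
      field_simps)

lemma infection_prob_bounds:
  assumes "valid_params p" "fraction_split Dmax m x" "d \<in> Dset Dmax"
  shows "0 \<le> gfrac m x d P * pP p + gU m x d * pU p"
    and "gfrac m x d P * pP p + gU m x d * pU p \<le> pU p"
proof -
  have split: "gfrac m x d P \<ge> 0" "gU m x d \<ge> 0" "gfrac m x d P + gU m x d = 1"
    using assms(2,3) by (auto simp: fraction_split_def)
  have prob: "0 \<le> pP p" "pP p \<le> pU p"
    using assms(1) by (auto simp: valid_params_def)
  then show "0 \<le> gfrac m x d P * pP p + gU m x d * pU p"
    using split by simp
  have "gfrac m x d P * pP p \<le> gfrac m x d P * pU p"
    using split prob by (intro mult_left_mono)
  then have "gfrac m x d P * pP p + gU m x d * pU p \<le> (gfrac m x d P + gU m x d) * pU p"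
    by (simp add: algebra_simps)
  then show "gfrac m x d P * pP p + gU m x d * pU p \<le> pU p"
    using split by simp
qed

context
  fixes p :: params and Dmax :: nat and m :: "nat \<Rightarrow> real" and x :: "nat \<Rightarrow> act \<Rightarrow> real"
  assumes Dmax: "Dmax \<ge> 1" and pop: "pop_vector Dmax m" and valid: "valid_params p"
    and split: "fraction_split Dmax m x"
begin

private lemmas prob = infection_prob_bounds[OF valid split]

private lemma beta_pos: "beta p > 0"
  using valid by (simp add: valid_params_def)

lemma gam_nonneg: "gam p Dmax m x \<ge> 0"
  unfolding gam_def using beta_pos prob(1) wgt_nonneg[OF pop]
  by (intro mult_nonneg_nonneg sum_nonneg) auto

lemma gam_le: "gam p Dmax m x \<le> beta p * pU p"
proof -
  have "(\<Sum>d\<in>Dset Dmax. wgt Dmax m d * (gfrac m x d P * pP p + gU m x d * pU p))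
      \<le> (\<Sum>d\<in>Dset Dmax. wgt Dmax m d * pU p)"
    using prob(2) wgt_nonneg[OF pop] by (intro sum_mono mult_left_mono) auto
  also have "\<dots> = pU p"
    using sum_wgt davg_pos[OF Dmax pop] by (simp add: sum_distrib_right[symmetric])
  finally show ?thesis
    unfolding gam_def using beta_pos by simp
qed

lemma lam_nonneg: "lam p Dmax m x \<ge> 0"
  unfolding lam_def using beta_pos prob(1) wgt_nonneg[OF pop]
  by (intro mult_nonneg_nonneg sum_nonneg) (auto simp: Dset_def)

lemma lam_le:
  "lam p Dmax m x \<le> beta p * pU p / davg Dmax m * (\<Sum>d\<in>Dset Dmax. real d * (real d - 1) * m d)"
proof -
  have "(\<Sum>d\<in>Dset Dmax. wgt Dmax m d * (real d - 1) * (gfrac m x d P * pP p + gU m x d * pU p))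
      \<le> (\<Sum>d\<in>Dset Dmax. wgt Dmax m d * (real d - 1) * pU p)"
    using prob(2) wgt_nonneg[OF pop] by (intro sum_mono mult_left_mono) (auto simp: Dset_def)
  also have "\<dots> = pU p / davg Dmax m * (\<Sum>d\<in>Dset Dmax. real d * (real d - 1) * m d)"
    by (simp add: wgt_def davg_def sum_distrib_left sum_divide_distrib[symmetric] algebra_simps
        diff_divide_distrib)
  finally show ?thesis
    unfolding lam_def using beta_pos mult_left_mono[of _ _ "beta p"] by fastforce
qed

lemma ext_nonneg: "ext p Dmax m x \<ge> 0"
  unfolding ext_def using gam_nonneg lam_nonneg by (simp add: sum_nonneg)

lemma ext_le_emax: "ext p Dmax m x \<le> emax p Dmax m"
proof -
  have "ext p Dmax m x = gam p Dmax m x * (\<Sum>k<Kh p. lam p Dmax m x ^ k)"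
    by (simp add: ext_def sum.atLeast1_atMost_eq)
  also have "\<dots> \<le> beta p * pU p *
      (\<Sum>k<Kh p. (beta p * pU p / davg Dmax m * (\<Sum>d\<in>Dset Dmax. real d * (real d - 1) * m d)) ^ k)"
    using gam_nonneg gam_le lam_nonneg lam_le
    by (intro mult_mono sum_mono power_mono sum_nonneg zero_le_power) auto
  finally show ?thesis
    by (simp add: emax_def)
qed

end

lemma nash_cost_P_le_N:
  assumes "nash_eq p Dmax m x" "d \<in> Dset Dmax" "x d P > 0"
  shows "cost p Dmax m x d P \<le> cost p Dmax m x d N"
proof -
  have "cost p Dmax m x d P = (MIN a\<in>UNIV. cost p Dmax m x d a)"
    using assms unfolding nash_eq_def by blast
  also have "\<dots> \<le> cost p Dmax m x d N"
    by (rule Min_le) (simp_all add: UNIV_act)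
  finally show ?thesis .
qed

lemma SC_unprotected:
  assumes "pop_vector Dmax m"
  shows "(\<Sum>d\<in>Dset Dmax. m d * cost p Dmax m x d N) = tau p * LU p * (1 + davg Dmax m * ext p Dmax m x)"
proof -
  have "(\<Sum>d\<in>Dset Dmax. m d * cost p Dmax m x d N)
      = tau p * LU p * ((\<Sum>d\<in>Dset Dmax. m d) + davg Dmax m * ext p Dmax m x)"
    by (simp add: cost_N davg_def sum_distrib_left sum_distrib_right sum.distrib algebra_simps)
  then show ?thesis
    using assms by (simp add: pop_vector_def)
qed

lemma SC_nash_le:
  assumes "pop_vector Dmax m" "nash_eq p Dmax m x"
  shows "SC p Dmax m x \<le> tau p * LU p * (1 + davg Dmax m * ext p Dmax m x)"
proof -
  have "SC p Dmax m x \<le> (\<Sum>d\<in>Dset Dmax. m d * cost p Dmax m x d N)"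
    unfolding SC_def
  proof (rule sum_mono)
    fix d assume d: "d \<in> Dset Dmax"
    have "x d P \<ge> 0"
      using assms(2) d by (simp add: nash_eq_def social_state_def)
    then have "x d P * cost p Dmax m x d P \<le> x d P * cost p Dmax m x d N"
      using nash_cost_P_le_N[OF assms(2) d] by (cases "x d P = 0") (simp_all add: mult_left_mono)
    then show "x d P * cost p Dmax m x d P + (m d - x d P) * cost p Dmax m x d N
        \<le> m d * cost p Dmax m x d N"
      by (simp add: algebra_simps)
  qed
  then show ?thesis
    using SC_unprotected[OF assms(1)] by simp
qed

lemma SCbar_ge:
  assumes "pop_vector Dmax m" "valid_params p" "cP p \<ge> (LU p - LP p) * tau p"
    and "y \<in> Yset Dmax m" "ext p Dmax m (Xof m y) \<ge> 0"
  shows "tau p * LU p \<le> SCbar p Dmax m y"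
proof -
  have "tau p * LU p = (\<Sum>d\<in>Dset Dmax. y d * (tau p * LU p) + (m d - y d) * (tau p * LU p))"
    using assms(1) by (simp add: pop_vector_def algebra_simps sum_distrib_left[symmetric])
  also have "\<dots> \<le> SCbar p Dmax m y"
    unfolding SCbar_def SC_def
  proof (rule sum_mono)
    fix d assume d: "d \<in> Dset Dmax"
    define e where "e = ext p Dmax m (Xof m y)"
    have "0 \<le> tau p * (real d * e) * LP p" "0 \<le> tau p * (real d * e) * LU p"
      using assms(2,5) by (simp_all add: valid_params_def e_def)
    then have "tau p * LU p \<le> cost p Dmax m (Xof m y) d P"
      and "tau p * LU p \<le> cost p Dmax m (Xof m y) d N"
      using assms(3) by (simp_all add: cost_P cost_N e_def[symmetric] algebra_simps)
    moreover have "0 \<le> y d" "y d \<le> m d"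
      using assms(4) d by (auto simp: Yset_def)
    ultimately show "y d * (tau p * LU p) + (m d - y d) * (tau p * LU p)
        \<le> Xof m y d P * cost p Dmax m (Xof m y) d P + (m d - Xof m y d P) * cost p Dmax m (Xof m y) d N"
      by (simp add: Xof_def add_mono mult_left_mono)
  qed
  finally show ?thesis .
qed

theorem theorem7:
  fixes p :: params and Dmax :: nat and m :: "nat \<Rightarrow> real"
    and xs :: "nat \<Rightarrow> act \<Rightarrow> real" and ys :: "nat \<Rightarrow> real"
  assumes "Dmax \<ge> 1"
    and "pop_vector Dmax m"
    and "valid_params p"
    and "assumption_A p"
    and "cP p \<ge> (LU p - LP p) * tau p"
    and "nash_eq p Dmax m xs"
    and "ys \<in> Yset Dmax m"
    and "\<forall>y\<in>Yset Dmax m. SCbar p Dmax m ys \<le> SCbar p Dmax m y"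
  shows "SC p Dmax m xs / SCbar p Dmax m ys \<le> 1 + davg Dmax m * emax p Dmax m"
proof -
  have split_xs: "fraction_split Dmax m xs"
    using assms(2,6) social_state_fraction_split by (simp add: nash_eq_def)
  have split_ys: "fraction_split Dmax m (Xof m ys)"
    using Xof_fraction_split[OF assms(2,7)] .
  have davg: "davg Dmax m > 0"
    using davg_pos[OF assms(1,2)] .
  have cost_pos: "tau p * LU p > 0"
    using assms(3) by (simp add: valid_params_def)
  have "SC p Dmax m xs \<le> tau p * LU p * (1 + davg Dmax m * ext p Dmax m xs)"
    using SC_nash_le[OF assms(2,6)] .
  also have "\<dots> \<le> tau p * LU p * (1 + davg Dmax m * emax p Dmax m)"
    using ext_le_emax[OF assms(1-3) split_xs] davg cost_pos by (simp add: mult_left_mono)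
  finally have upper: "SC p Dmax m xs \<le> tau p * LU p * (1 + davg Dmax m * emax p Dmax m)" .
  have lower: "tau p * LU p \<le> SCbar p Dmax m ys"
    using SCbar_ge[OF assms(2,3,5,7) ext_nonneg[OF assms(1-3) split_ys]] .
  have "0 \<le> 1 + davg Dmax m * emax p Dmax m"
    using ext_nonneg[OF assms(1-3) split_xs] ext_le_emax[OF assms(1-3) split_xs] davg by simp
  then show ?thesis
    using upper lower cost_pos
    by (simp add: divide_le_eq order_trans[OF upper] mult_right_mono mult.commute)
qed

end
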